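(* Let $p$ be a prime, $n\ge1$, and $a_1,\dots,a_n\in\mathbb{Z}$. Define $\mathfrak{b}':\{0,\dots,p-1\}^n\to\mathbb{Z}$ by $\mathfrak{b}'(x_1,\dots,x_n)=\sum_{i=1}^na_ix_i$, and let $r:\mathbb{Z}\to\{0,\dots,p^n-1\}$ be reduction modulo $p^n$. Then $r\circ\mathfrak{b}':\{0,\dots,p-1\}^n\to\{0,\dots,p^n-1\}$ is bijective if and only if, after relabelling the indices $1,\dots,n$ if necessary, $v(a_i)=n-i$ for $1\le i\le n$, where $v$ denotes the $p$-adic valuation. *)

theory Defs
  imports Main "HOL-Library.FuncSet" "HOL-Computational_Algebra.Primes"
begin

end

theory Submission
  imports Defs "HOL-Library.Real_Mod"
begin

(* If the p-adic valuations of the a_i are exactly 0, ..., n - 1, the map is injective, hence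
   bijective since both sides have p^n elements: for x \<noteq> y in the box put d = x - y, whose entries
   lie strictly between -p and p. Among the terms a_i d_i with d_i \<noteq> 0 the one of least valuation k
   is the only one not divisible by p^(k+1), so p^n cannot divide the sum of all a_i d_i.

   Conversely, let the map be bijective and k < n, and sum the character m \<mapsto> exp(2\<pi>im / p^(k+1))
   over the box. Since p^(k+1) divides p^n this is the sum over all residues mod p^n, which is 0.
   On the other hand it factors as a product over i of geometric sums of the first p powers of
   exp(2\<pi>i a_i / p^(k+1)), and such a factor vanishes exactly when the valuation of a_i is k. *)

definition unity_root :: "nat \<Rightarrow> int \<Rightarrow> complex" where
  "unity_root N m = cis (2 * pi * of_int m / of_nat N)"

lemma unity_root_add: "unity_root N (m + k) = unity_root N m * unity_root N k"
  by (simp add: unity_root_def cis_mult add_divide_distrib algebra_simps)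

lemma unity_root_sum:
  "finite A \<Longrightarrow> unity_root N (\<Sum>i\<in>A. f i) = (\<Prod>i\<in>A. unity_root N (f i))"
  by (induction A rule: finite_induct) (simp_all add: unity_root_add, simp add: unity_root_def)

lemma unity_root_mult_of_nat: "unity_root N (m * int k) = unity_root N m ^ k"
  by (simp add: unity_root_def DeMoivre algebra_simps)

lemma unity_root_eq_1_iff:
  assumes "N > 0"
  shows "unity_root N m = 1 \<longleftrightarrow> int N dvd m"
proof -
  have "unity_root N m = 1 \<longleftrightarrow> (\<exists>k. 2 * pi * of_int m / of_nat N = of_int k * (2 * pi))"
    by (simp add: unity_root_def cis_eq_1_iff)
  also have "\<dots> \<longleftrightarrow> (\<exists>k. real_of_int m = real_of_int (k * int N))"
    using assms by (simp add: field_simps)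
  also have "\<dots> \<longleftrightarrow> int N dvd m"
    by (auto simp: dvd_def mult.commute simp del: of_int_mult)
  finally show ?thesis .
qed

lemma unity_root_mod:
  assumes "int N dvd M"
  shows "unity_root N (m mod M) = unity_root N m"
proof (cases "N = 0")
  case True
  thus ?thesis using assms by simp
next
  case False
  have "unity_root N m = unity_root N (m mod M) * unity_root N (M * (m div M))"
    by (metis unity_root_add mod_mult_div_eq mult.commute)
  also have "unity_root N (M * (m div M)) = 1"
    using False assms by (simp add: unity_root_eq_1_iff)
  finally show ?thesis by simp
qed

lemma sum_atLeastLessThan_int_eq:
  "(\<Sum>y\<in>{0..<int m}. g y) = (\<Sum>k<m. g (int k))"
proof -
  have "{0..<int m} = int ` {..<m}"
    by (simp add: image_int_atLeastLessThan atLeast0LessThan[symmetric])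
  thus ?thesis by (simp add: sum.reindex)
qed

lemma sum_powers_eq_0_iff:
  fixes z :: "'a::field_char_0"
  assumes "m > 0"
  shows "(\<Sum>k<m. z ^ k) = 0 \<longleftrightarrow> z \<noteq> 1 \<and> z ^ m = 1"
  using assms by (auto simp: sum_gp_strict)

lemma sum_unity_root_atLeastLessThan_eq_0:
  assumes "N > 1" "N dvd M"
  shows "(\<Sum>r\<in>{0..<int M}. unity_root N r) = 0"
proof (cases "M = 0")
  case False
  have "(\<Sum>r\<in>{0..<int M}. unity_root N r) = (\<Sum>k<M. unity_root N 1 ^ k)"
    by (simp add: sum_atLeastLessThan_int_eq flip: unity_root_mult_of_nat)
  moreover have "unity_root N 1 \<noteq> 1"
    using assms by (simp add: unity_root_eq_1_iff)
  moreover have "unity_root N 1 ^ M = 1"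
    using assms by (simp add: unity_root_eq_1_iff flip: unity_root_mult_of_nat)
  ultimately show ?thesis
    using False by (simp add: sum_powers_eq_0_iff)
qed simp

lemma multiplicity_eq_iff_power_dvd:
  fixes p c :: "'a::factorial_semiring"
  assumes "prime p"
  shows "c \<noteq> 0 \<and> multiplicity p c = k \<longleftrightarrow> p ^ k dvd c \<and> \<not> p ^ Suc k dvd c"
  by (metis assms multiplicity_dvd multiplicity_eqI not_prime_unit power_dvd_iff_le_multiplicity
      Suc_n_not_le_n dvd_0_right)

lemma sum_unity_root_multiples_eq_0_iff:
  assumes "prime p"
  shows "(\<Sum>y\<in>{0..<int p}. unity_root (p ^ Suc k) (c * y)) = 0
           \<longleftrightarrow> c \<noteq> 0 \<and> multiplicity (int p) c = k"
proof -
  have p: "p > 0" "prime (int p)" using assms prime_gt_0_nat by simp_all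
  have "(\<Sum>y\<in>{0..<int p}. unity_root (p ^ Suc k) (c * y))
          = (\<Sum>j<p. unity_root (p ^ Suc k) c ^ j)"
    by (simp add: sum_atLeastLessThan_int_eq flip: unity_root_mult_of_nat)
  also have "\<dots> = 0 \<longleftrightarrow>
      unity_root (p ^ Suc k) c \<noteq> 1 \<and> unity_root (p ^ Suc k) (c * int p) = 1"
    using p by (simp add: sum_powers_eq_0_iff unity_root_mult_of_nat)
  also have "\<dots> \<longleftrightarrow> \<not> int p ^ Suc k dvd c \<and> int p ^ k dvd c"
    using p by (simp add: unity_root_eq_1_iff mult.commute[of c])
  also have "\<dots> \<longleftrightarrow> c \<noteq> 0 \<and> multiplicity (int p) c = k"
    using p by (simp add: multiplicity_eq_iff_power_dvd conj_commute)
  finally show ?thesis .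
qed

lemma sum_PiE_unity_root_linear_form:
  assumes "finite I" "finite Y"
  shows "(\<Sum>x\<in>I \<rightarrow>\<^sub>E Y. unity_root N (\<Sum>i\<in>I. a i * x i))
           = (\<Prod>i\<in>I. \<Sum>y\<in>Y. unity_root N (a i * y))"
  using assms by (simp add: unity_root_sum prod_sum_PiE)

lemma bij_linear_form_mod_imp_ex_multiplicity:
  fixes a :: "nat \<Rightarrow> int"
  assumes p: "prime p" and "k < n"
    and bij: "bij_betw (\<lambda>x. (\<Sum>i<n. a i * x i) mod (int p ^ n))
                ({..<n} \<rightarrow>\<^sub>E {0..<int p}) {0..<int p ^ n}"
  shows "\<exists>i<n. a i \<noteq> 0 \<and> multiplicity (int p) (a i) = k"
proof -
  define N where "N = p ^ Suc k"
  have "N > 1"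
    unfolding N_def using prime_gt_1_nat[OF p] by (rule one_less_power) simp
  have "N dvd p ^ n"
    unfolding N_def by (rule le_imp_power_dvd) (use \<open>k < n\<close> in simp)
  have "(\<Prod>i<n. \<Sum>y\<in>{0..<int p}. unity_root N (a i * y))
          = (\<Sum>x\<in>{..<n} \<rightarrow>\<^sub>E {0..<int p}. unity_root N (\<Sum>i<n. a i * x i))"
    by (simp add: sum_PiE_unity_root_linear_form)
  also have "\<dots> = (\<Sum>x\<in>{..<n} \<rightarrow>\<^sub>E {0..<int p}.
                      unity_root N ((\<Sum>i<n. a i * x i) mod (int p ^ n)))"
    using \<open>N dvd p ^ n\<close> by (simp add: unity_root_mod flip: of_nat_power)
  also have "\<dots> = (\<Sum>r\<in>{0..<int (p ^ n)}. unity_root N r)"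
    using sum.reindex_bij_betw[OF bij, of "unity_root N"] by simp
  also have "\<dots> = 0"
    using \<open>N > 1\<close> \<open>N dvd p ^ n\<close> by (rule sum_unity_root_atLeastLessThan_eq_0)
  finally obtain i where "i < n" "(\<Sum>y\<in>{0..<int p}. unity_root N (a i * y)) = 0"
    by auto
  thus ?thesis
    using sum_unity_root_multiples_eq_0_iff[OF p] by (auto simp: N_def)
qed

lemma prime_dvd_if_power_Suc_multiplicity_dvd_mult:
  fixes p a b :: "'a::factorial_semiring"
  assumes "prime p" "a \<noteq> 0" and dvd: "p ^ Suc (multiplicity p a) dvd a * b"
  shows "p dvd b"
proof (cases "b = 0")
  case False
  have "Suc (multiplicity p a) \<le> multiplicity p (a * b)"
    using dvd assms False by (simp add: power_dvd_iff_le_multiplicity not_prime_unit del: power_Suc)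
  also have "\<dots> = multiplicity p a + multiplicity p b"
    using assms False by (simp add: prime_elem_multiplicity_mult_distrib)
  finally show ?thesis
    by (intro multiplicity_dvd'[where n = 1, simplified]) simp
qed simp

lemma prime_power_dvd_sum_distinct_multiplicities_imp_zero:
  fixes p :: int and a d :: "'i \<Rightarrow> int"
  assumes p: "prime p" and "finite I"
    and nonzero: "\<And>i. i \<in> I \<Longrightarrow> a i \<noteq> 0"
    and less: "\<And>i. i \<in> I \<Longrightarrow> multiplicity p (a i) < n"
    and distinct: "inj_on (\<lambda>i. multiplicity p (a i)) I"
    and small: "\<And>i. i \<in> I \<Longrightarrow> \<bar>d i\<bar> < p"
    and dvd: "p ^ n dvd (\<Sum>i\<in>I. a i * d i)"
  shows "\<forall>i\<in>I. d i = 0"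
proof (rule ccontr)
  assume "\<not> ?thesis"
  then obtain j where j: "j \<in> I" "d j \<noteq> 0"
    and min: "\<And>i. i \<in> I \<Longrightarrow> d i \<noteq> 0 \<Longrightarrow> multiplicity p (a j) \<le> multiplicity p (a i)"
    using ex_has_least_nat[of "\<lambda>i. i \<in> I \<and> d i \<noteq> 0" _ "\<lambda>i. multiplicity p (a i)"] by blast
  define k where "k = multiplicity p (a j)"
  have "p ^ Suc k dvd (\<Sum>i\<in>I. a i * d i)"
    using dvd less[OF j(1)] by (metis k_def Suc_leI dvd_trans le_imp_power_dvd)
  moreover have "p ^ Suc k dvd (\<Sum>i\<in>I - {j}. a i * d i)"
  proof (rule dvd_sum)
    fix i assume i: "i \<in> I - {j}"
    show "p ^ Suc k dvd a i * d i"
    proof (cases "d i = 0")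
      case False
      have "k < multiplicity p (a i)"
        using min[of i] distinct i j False unfolding k_def inj_on_def
        by (metis DiffE insertI1 le_neq_implies_less)
      hence "p ^ Suc k dvd a i" by (simp add: multiplicity_dvd' Suc_leI del: power_Suc)
      thus ?thesis by simp
    qed simp
  qed
  ultimately have "p ^ Suc k dvd a j * d j"
    using j(1) \<open>finite I\<close> by (simp add: sum.remove dvd_add_left_iff)
  hence "p dvd d j"
    unfolding k_def by (rule prime_dvd_if_power_Suc_multiplicity_dvd_mult[OF p nonzero[OF j(1)]])
  hence "p \<le> \<bar>d j\<bar>"
    using j(2) p by (metis dvd_imp_le_int abs_of_pos prime_gt_0_int)
  thus False using small[OF j(1)] by simp
qed

lemma inj_on_linear_form_mod:
  fixes a :: "nat \<Rightarrow> int"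
  assumes p: "prime p"
    and "\<And>i. i < n \<Longrightarrow> a i \<noteq> 0" "\<And>i. i < n \<Longrightarrow> multiplicity (int p) (a i) < n"
    and "inj_on (\<lambda>i. multiplicity (int p) (a i)) {..<n}"
  shows "inj_on (\<lambda>x. (\<Sum>i<n. a i * x i) mod (int p ^ n)) ({..<n} \<rightarrow>\<^sub>E {0..<int p})"
proof (rule inj_onI)
  fix x y assume x: "x \<in> {..<n} \<rightarrow>\<^sub>E {0..<int p}" and y: "y \<in> {..<n} \<rightarrow>\<^sub>E {0..<int p}"
    and eq: "(\<Sum>i<n. a i * x i) mod (int p ^ n) = (\<Sum>i<n. a i * y i) mod (int p ^ n)"
  have "int p ^ n dvd (\<Sum>i<n. a i * (x i - y i))"
    using eq by (simp add: mod_eq_dvd_iff sum_subtractf right_diff_distrib)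
  moreover have "\<bar>x i - y i\<bar> < int p" if "i < n" for i
    using x y that by (force simp: PiE_iff abs_less_iff)
  ultimately have "\<forall>i<n. x i - y i = 0"
    using prime_power_dvd_sum_distinct_multiplicities_imp_zero[of "int p" "{..<n}" a n "\<lambda>i. x i - y i"]
      p assms by simp
  thus "x = y" using x y by (intro PiE_ext) auto
qed

lemma bij_betw_linear_form_mod:
  fixes a :: "nat \<Rightarrow> int"
  assumes p: "prime p" and "\<And>i. i < n \<Longrightarrow> a i \<noteq> 0"
    and bij: "bij_betw (\<lambda>i. multiplicity (int p) (a i)) {..<n} {..<n}"
  shows "bij_betw (\<lambda>x. (\<Sum>i<n. a i * x i) mod (int p ^ n))
           ({..<n} \<rightarrow>\<^sub>E {0..<int p}) {0..<int p ^ n}"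
proof -
  let ?f = "\<lambda>x. (\<Sum>i<n. a i * x i) mod (int p ^ n)" and ?A = "{..<n} \<rightarrow>\<^sub>E {0..<int p}"
  have inj: "inj_on ?f ?A"
    using assms by (intro inj_on_linear_form_mod) (auto simp: bij_betw_def)
  have "?f ` ?A \<subseteq> {0..<int p ^ n}"
    using prime_gt_0_nat[OF p] by (simp add: image_subset_iff)
  moreover have "card (?f ` ?A) = card {0..<int p ^ n}"
  proof -
    have "card (?f ` ?A) = p ^ n"
      using inj by (simp add: card_image card_PiE)
    also have "\<dots> = card {0..<int p ^ n}"
      by (simp flip: of_nat_power)
    finally show ?thesis .
  qed
  ultimately have "?f ` ?A = {0..<int p ^ n}"
    by (intro card_subset_eq) simp_all
  with inj show ?thesis
    by (simp add: bij_betw_def)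
qed

lemma bij_betw_lessThan_if_attains_all:
  fixes v :: "nat \<Rightarrow> nat"
  assumes "\<And>k. k < n \<Longrightarrow> \<exists>i<n. P i \<and> v i = k"
  shows "(\<forall>i<n. P i) \<and> bij_betw v {..<n} {..<n}"
proof -
  define J where "J = {i. i < n \<and> P i}"
  have J: "J \<subseteq> {..<n}" "{..<n} \<subseteq> v ` J"
    using assms by (force simp: J_def)+
  have "n \<le> card (v ` J)"
    using card_mono[OF finite_imageI[OF finite_subset[OF J(1)]] J(2)] by simp
  also have "\<dots> \<le> card J"
    using J(1) by (intro card_image_le) (simp add: finite_subset)
  finally have "J = {..<n}"
    using J(1) card_mono[OF finite_lessThan J(1)] by (intro card_subset_eq) auto
  moreover have "v ` {..<n} = {..<n}"
    using J \<open>n \<le> card (v ` J)\<close> \<open>J = {..<n}\<close> card_image_le[of "{..<n}" v]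
    by (intro card_subset_eq[symmetric]) auto
  ultimately show ?thesis
    by (auto simp: J_def bij_betw_def eq_card_imp_inj_on)
qed

lemma ex_bij_relabelling_iff:
  fixes v :: "nat \<Rightarrow> nat"
  shows "(\<exists>\<sigma>. bij_betw \<sigma> {..<n} {..<n} \<and> (\<forall>i<n. P (\<sigma> i) \<and> v (\<sigma> i) = n - 1 - i))
     \<longleftrightarrow> (\<forall>i<n. P i) \<and> bij_betw v {..<n} {..<n}"
proof
  assume "\<exists>\<sigma>. bij_betw \<sigma> {..<n} {..<n} \<and> (\<forall>i<n. P (\<sigma> i) \<and> v (\<sigma> i) = n - 1 - i)"
  then obtain \<sigma> where \<sigma>: "bij_betw \<sigma> {..<n} {..<n}"
    and P: "\<And>i. i < n \<Longrightarrow> P (\<sigma> i) \<and> v (\<sigma> i) = n - 1 - i" by blast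
  have "\<exists>i<n. P i \<and> v i = k" if "k < n" for k
  proof (intro exI conjI)
    have j: "n - 1 - k < n" "n - 1 - (n - 1 - k) = k" using that by simp_all
    show "\<sigma> (n - 1 - k) < n" using bij_betwE[OF \<sigma>] j(1) by simp
    show "P (\<sigma> (n - 1 - k))" "v (\<sigma> (n - 1 - k)) = k" using P[OF j(1)] j(2) by simp_all
  qed
  thus "(\<forall>i<n. P i) \<and> bij_betw v {..<n} {..<n}"
    by (rule bij_betw_lessThan_if_attains_all)
next
  assume "(\<forall>i<n. P i) \<and> bij_betw v {..<n} {..<n}"
  hence P: "\<And>i. i < n \<Longrightarrow> P i" and v: "bij_betw v {..<n} {..<n}" by auto
  define \<sigma> where "\<sigma> i = inv_into {..<n} v (n - 1 - i)" for i
  have rev: "bij_betw (\<lambda>i. n - 1 - i) {..<n} {..<n}"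
    by (rule bij_betw_byWitness[where f' = "\<lambda>i. n - 1 - i"]) auto
  have \<sigma>: "bij_betw \<sigma> {..<n} {..<n}"
    unfolding \<sigma>_def using bij_betw_trans[OF rev bij_betw_inv_into[OF v]] by (simp add: comp_def)
  moreover have "P (\<sigma> i) \<and> v (\<sigma> i) = n - 1 - i" if "i < n" for i
  proof
    show "P (\<sigma> i)" using P bij_betwE[OF \<sigma>] that by simp
    show "v (\<sigma> i) = n - 1 - i"
      unfolding \<sigma>_def using v that by (intro f_inv_into_f) (auto simp: bij_betw_def)
  qed
  ultimately show "\<exists>\<sigma>. bij_betw \<sigma> {..<n} {..<n} \<and> (\<forall>i<n. P (\<sigma> i) \<and> v (\<sigma> i) = n - 1 - i)"
    by blast
qed

lemma bij_betw_linear_form_mod_iff: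
  fixes a :: "nat \<Rightarrow> int"
  assumes "prime p"
  shows "bij_betw (\<lambda>x. (\<Sum>i<n. a i * x i) mod (int p ^ n))
           ({..<n} \<rightarrow>\<^sub>E {0..<int p}) {0..<int p ^ n}
         \<longleftrightarrow> (\<forall>i<n. a i \<noteq> 0) \<and> bij_betw (\<lambda>i. multiplicity (int p) (a i)) {..<n} {..<n}"
proof
  assume "bij_betw (\<lambda>x. (\<Sum>i<n. a i * x i) mod (int p ^ n))
            ({..<n} \<rightarrow>\<^sub>E {0..<int p}) {0..<int p ^ n}"
  thus "(\<forall>i<n. a i \<noteq> 0) \<and> bij_betw (\<lambda>i. multiplicity (int p) (a i)) {..<n} {..<n}"
    by (intro bij_betw_lessThan_if_attains_all bij_linear_form_mod_imp_ex_multiplicity[OF assms])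
qed (intro bij_betw_linear_form_mod[OF assms], auto)

theorem propositionA2:
  fixes p n :: nat and a :: "nat \<Rightarrow> int"
  assumes "prime p" and "n \<ge> 1"
  shows "bij_betw (\<lambda>x. (\<Sum>i<n. a i * x i) mod (int p ^ n))
            ({..<n} \<rightarrow>\<^sub>E {0..<int p}) {0..<int p ^ n}
         \<longleftrightarrow> (\<exists>\<sigma>. bij_betw \<sigma> {..<n} {..<n} \<and>
               (\<forall>i<n. a (\<sigma> i) \<noteq> 0 \<and> multiplicity (int p) (a (\<sigma> i)) = n - 1 - i))"
  unfolding bij_betw_linear_form_mod_iff[OF \<open>prime p\<close>]
  by (rule ex_bij_relabelling_iff[where P = "\<lambda>i. a i \<noteq> 0"
        and v = "\<lambda>i. multiplicity (int p) (a i)", symmetric])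

end
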